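(* Let $\langle S,L,\tau,\ell\rangle$ be a labelled Markov chain and let $R$ be a bisimulation with $\simeq\,\subseteq R\subseteq\,\sim$. Then $\mathrm{Refine}(R)$ is a bisimulation with $\simeq\,\subseteq\mathrm{Refine}(R)\subseteq\,\sim$.
   Context: Labelled Markov chain $\langle S,L,\tau,\ell\rangle$: finite $S$, finite $L$, $\tau:S\to\mathcal{D}(S)$, $\ell:S\to L$, $|\ell(S)|\ge2$. $\Omega(\mu,\nu)$ = couplings (distributions on $S\times S$ with marginals $\mu,\nu$). A bisimulation is an equivalence relation $R\subseteq S\times S$ such that for all $(s,t)\in R$, $\ell(s)=\ell(t)$ and some $\omega\in\Omega(\tau(s),\tau(t))$ has $\mathrm{support}(\omega)\subseteq R$; $\sim$ is bisimilarity. $S^2_\Delta=\{(s,s)\}$, $S^2_1=\{(s,t)\mid\ell(s)\ne\ell(t)\}$. A policy is $P:S\times S\to\mathcal{D}(S\times S)$ with $P(s,t)\in\Omega(\tau(s),\tau(t))$ for $(s,t)\notin S^2_1$ and $P(s,t)$ the point mass at $(s,t)$ for $(s,t)\in S^2_1$; $\mathcal{P}$ = set of policies, inducing Markov chains $\langle S\times S,P\rangle$. Robust bisimilarity: $s\simeq t$ iff some $P\in\mathcal{P}$ makes $(s,t)$ reach $S^2_\Delta$ with probability $1$. $R$ supports a path $(u_1,v_1)\dots(u_n,v_n)$ if $(u_i,v_i)\in R$ and $\mathrm{support}(P(u_i,v_i))\subseteq R$ for all $i$. $\mathrm{Filter}(R)=\{(s,t)\in R\mid\exists P\in\mathcal{P}$: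 $R$ supports a path from $(s,t)$ to $S^2_\Delta\}$; $\mathrm{Prune}(R)=\{(s,t)\in R\mid\forall u:((t,u)\in R\Rightarrow(s,u)\in R)\wedge((u,s)\in R\Rightarrow(u,t)\in R)\}$; $\mathrm{Bisim}(R)$ = largest bisimulation contained in $R$; $\mathrm{Refine}(R)=\mathrm{Bisim}(\mathrm{Prune}(\mathrm{Filter}(R)))$. *)

theory Defs
  imports "HOL-Probability.Probability"
begin

text \<open>Labelled Markov chain: states form the finite type 's (S = UNIV),
  labels the finite type 'l, transition function tau, labelling lab.\<close>

definition couplings :: "'s pmf \<Rightarrow> 's pmf \<Rightarrow> ('s \<times> 's) pmf set" where
  "couplings \<mu> \<nu> = {\<omega>. map_pmf fst \<omega> = \<mu> \<and> map_pmf snd \<omega> = \<nu>}"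

definition bisimulation :: "('s \<Rightarrow> 's pmf) \<Rightarrow> ('s \<Rightarrow> 'l) \<Rightarrow> ('s \<times> 's) set \<Rightarrow> bool" where
  "bisimulation \<tau> lab R \<longleftrightarrow> equiv UNIV R \<and>
     (\<forall>(s,t)\<in>R. lab s = lab t \<and> (\<exists>\<omega>\<in>couplings (\<tau> s) (\<tau> t). set_pmf \<omega> \<subseteq> R))"

definition bisimilarity :: "('s \<Rightarrow> 's pmf) \<Rightarrow> ('s \<Rightarrow> 'l) \<Rightarrow> ('s \<times> 's) set" where
  "bisimilarity \<tau> lab = \<Union>{R. bisimulation \<tau> lab R}"

definition diag_pairs :: "('s \<times> 's) set" where
  "diag_pairs = {(s,s) | s. True}"

definition diff_label_pairs :: "('s \<Rightarrow> 'l) \<Rightarrow> ('s \<times> 's) set" where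
  "diff_label_pairs lab = {(s,t). lab s \<noteq> lab t}"

definition policies :: "('s \<Rightarrow> 's pmf) \<Rightarrow> ('s \<Rightarrow> 'l) \<Rightarrow> ('s \<times> 's \<Rightarrow> ('s \<times> 's) pmf) set" where
  "policies \<tau> lab = {P. \<forall>u. (u \<notin> diff_label_pairs lab \<longrightarrow> P u \<in> couplings (\<tau> (fst u)) (\<tau> (snd u)))
                          \<and> (u \<in> diff_label_pairs lab \<longrightarrow> P u = return_pmf u)}"

text \<open>Probability, in the Markov chain on S x S induced by P, of reaching the
  diagonal from u within n steps.\<close>
primrec reach_within :: "('s \<times> 's \<Rightarrow> ('s \<times> 's) pmf) \<Rightarrow> nat \<Rightarrow> 's \<times> 's \<Rightarrow> real" where
  "reach_within P 0 u = (if u \<in> diag_pairs then 1 else 0)"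
| "reach_within P (Suc n) u =
     (if u \<in> diag_pairs then 1 else measure_pmf.expectation (P u) (reach_within P n))"

definition reach_prob :: "('s \<times> 's \<Rightarrow> ('s \<times> 's) pmf) \<Rightarrow> 's \<times> 's \<Rightarrow> real" where
  "reach_prob P u = (SUP n. reach_within P n u)"

definition robust_bisim :: "('s \<Rightarrow> 's pmf) \<Rightarrow> ('s \<Rightarrow> 'l) \<Rightarrow> ('s \<times> 's) set" where
  "robust_bisim \<tau> lab = {(s,t). \<exists>P\<in>policies \<tau> lab. reach_prob P (s,t) = 1}"

definition supports_path_to_diag ::
    "('s \<times> 's) set \<Rightarrow> ('s \<times> 's \<Rightarrow> ('s \<times> 's) pmf) \<Rightarrow> 's \<times> 's \<Rightarrow> bool" where
  "supports_path_to_diag R P u \<longleftrightarrow> (\<exists>xs. xs \<noteq> [] \<and> hd xs = u \<and> last xs \<in> diag_pairs \<and>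
      (\<forall>i. Suc i < length xs \<longrightarrow> xs ! Suc i \<in> set_pmf (P (xs ! i))) \<and>
      (\<forall>x\<in>set xs. x \<in> R \<and> set_pmf (P x) \<subseteq> R))"

definition Filter :: "('s \<Rightarrow> 's pmf) \<Rightarrow> ('s \<Rightarrow> 'l) \<Rightarrow> ('s \<times> 's) set \<Rightarrow> ('s \<times> 's) set" where
  "Filter \<tau> lab R = {(s,t)\<in>R. \<exists>P\<in>policies \<tau> lab. supports_path_to_diag R P (s,t)}"

definition Prune :: "('s \<times> 's) set \<Rightarrow> ('s \<times> 's) set" where
  "Prune R = {(s,t)\<in>R. \<forall>u. ((t,u)\<in>R \<longrightarrow> (s,u)\<in>R) \<and> ((u,s)\<in>R \<longrightarrow> (u,t)\<in>R)}"

definition Bisim :: "('s \<Rightarrow> 's pmf) \<Rightarrow> ('s \<Rightarrow> 'l) \<Rightarrow> ('s \<times> 's) set \<Rightarrow> ('s \<times> 's) set" where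
  "Bisim \<tau> lab R = \<Union>{B. bisimulation \<tau> lab B \<and> B \<subseteq> R}"

definition Refine :: "('s \<Rightarrow> 's pmf) \<Rightarrow> ('s \<Rightarrow> 'l) \<Rightarrow> ('s \<times> 's) set \<Rightarrow> ('s \<times> 's) set" where
  "Refine \<tau> lab R = Bisim \<tau> lab (Prune (Filter \<tau> lab R))"

end

theory Submission
  imports Defs
begin

(* Prune turns any relation into a transitive one and preserves reflexivity, and the largest
   bisimulation inside a reflexive transitive relation is closed under equivalence closure
   (couplings compose), so it is itself a bisimulation; it lies in bisimilarity by definition.

   A policy that reaches the diagonal almost surely from a pair off the diagonal couples its
   successors so that each of them again reaches the diagonal almost surely. Hence the
   equivalence closure of robust bisimilarity is a bisimulation, and it remains to place robust
   bisimilarity inside Prune (Filter R). A pair lies in Filter R iff it reaches the diagonal along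
   couplings supported in R, even if these do not come from one policy: always choosing a
   coupling that decreases the distance to the diagonal yields a single policy. Finally, if s is
   robustly bisimilar to t and (t, u) reaches the diagonal, gluing the policy's coupling at (s, t)
   to the coupling used at (t, u) shows, by induction on the distance, that (s, u) reaches it
   too; this is the closure property that Prune demands. *)

lemma couplings_swap: "\<omega> \<in> couplings \<mu> \<nu> \<Longrightarrow> map_pmf prod.swap \<omega> \<in> couplings \<nu> \<mu>"
  by (auto simp: couplings_def pmf.map_comp o_def)

lemma couplings_diag: "map_pmf (\<lambda>y. (y, y)) \<mu> \<in> couplings \<mu> \<mu>"
  by (auto simp: couplings_def pmf.map_comp o_def)

lemma set_pmf_couplings:
  assumes "\<omega> \<in> couplings \<mu> \<nu>"
  shows "set_pmf \<mu> = fst ` set_pmf \<omega>" and "set_pmf \<nu> = snd ` set_pmf \<omega>"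
  using assms unfolding couplings_def by (metis (mono_tags) mem_Collect_eq set_map_pmf)+

lemma couplings_compose:
  assumes \<omega>1: "\<omega>1 \<in> couplings \<mu> \<nu>" and \<omega>2: "\<omega>2 \<in> couplings \<nu> \<rho>"
  obtains \<theta> where "\<theta> \<in> couplings \<mu> \<rho>" and "set_pmf \<theta> = set_pmf \<omega>1 O set_pmf \<omega>2"
proof -
  have \<mu>: "\<mu> = map_pmf fst \<omega>1" and \<nu>: "\<nu> = map_pmf snd \<omega>1"
    and \<nu>': "\<nu> = map_pmf fst \<omega>2" and \<rho>: "\<rho> = map_pmf snd \<omega>2"
    using \<omega>1 \<omega>2 by (auto simp: couplings_def)
  define \<theta> where "\<theta> = bind_pmf \<omega>1 (\<lambda>xy. bind_pmf (cond_pmf \<omega>2 {yz. fst yz = snd xy})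
      (\<lambda>yz. return_pmf (fst xy, snd yz)))"
  have "set_pmf \<omega>2 \<inter> {yz. fst yz = snd xy} \<noteq> {}" if "xy \<in> set_pmf \<omega>1" for xy
  proof -
    have "snd xy \<in> set_pmf (map_pmf fst \<omega>2)"
      using that by (simp add: \<nu>'[symmetric] \<nu>)
    then show ?thesis by force
  qed
  then have "set_pmf \<theta> = set_pmf \<omega>1 O set_pmf \<omega>2"
    by (auto simp: \<theta>_def relcomp_unfold) force
  moreover have "map_pmf fst \<theta> = \<mu>"
    by (simp add: \<theta>_def map_bind_pmf split_beta map_pmf_def[symmetric] \<mu> map_pmf_comp)
  moreover have "map_pmf snd \<theta> = map_pmf snd (bind_pmf \<nu> (\<lambda>y. cond_pmf \<omega>2 {yz. fst yz = y}))"
    by (simp add: \<theta>_def \<nu> split_beta bind_map_pmf map_pmf_def[symmetric] map_bind_pmf map_pmf_comp)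
  then have "map_pmf snd \<theta> = \<rho>"
    unfolding \<rho> \<nu>' bind_map_pmf by (subst (asm) bind_cond_pmf_cancel) (auto simp: eq_commute)
  ultimately show ?thesis
    using that by (simp add: couplings_def)
qed

lemma bisimulation_diag_pairs_subset: "bisimulation \<tau> lab R \<Longrightarrow> diag_pairs \<subseteq> R"
  by (auto simp: bisimulation_def diag_pairs_def equiv_def refl_on_def)

lemma bisimulation_same_label: "bisimulation \<tau> lab R \<Longrightarrow> u \<in> R \<Longrightarrow> u \<notin> diff_label_pairs lab"
  by (auto simp: bisimulation_def diff_label_pairs_def)

lemma bisimulation_rtrancl:
  assumes "sym E"
    and step: "\<And>s t. (s, t) \<in> E \<Longrightarrow> s \<noteq> t \<Longrightarrow>
      lab s = lab t \<and> (\<exists>\<omega>\<in>couplings (\<tau> s) (\<tau> t). set_pmf \<omega> \<subseteq> E\<^sup>*)"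
  shows "bisimulation \<tau> lab (E\<^sup>*)"
proof -
  have "lab s = lab u \<and> (\<exists>\<omega>\<in>couplings (\<tau> s) (\<tau> u). set_pmf \<omega> \<subseteq> E\<^sup>*)"
    if "(s, u) \<in> E\<^sup>*" for s u
    using that
  proof (induction rule: rtrancl_induct)
    case base
    have "set_pmf (map_pmf (\<lambda>y. (y, y)) (\<tau> s)) \<subseteq> E\<^sup>*" by auto
    then show ?case using couplings_diag by blast
  next
    case (step t u)
    show ?case
    proof (cases "t = u")
      case True
      with step.IH show ?thesis by simp
    next
      case False
      obtain \<omega>1 where "\<omega>1 \<in> couplings (\<tau> s) (\<tau> t)" "set_pmf \<omega>1 \<subseteq> E\<^sup>*"
        using step.IH by blast
      moreover obtain \<omega>2 where "\<omega>2 \<in> couplings (\<tau> t) (\<tau> u)" "set_pmf \<omega>2 \<subseteq> E\<^sup>*"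
        and "lab t = lab u"
        using assms(2) step.hyps(2) False by blast
      ultimately obtain \<theta> where "\<theta> \<in> couplings (\<tau> s) (\<tau> u)" "set_pmf \<theta> \<subseteq> E\<^sup>* O E\<^sup>*"
        by (metis couplings_compose relcomp_mono)
      with step.IH \<open>lab t = lab u\<close> show ?thesis by auto
    qed
  qed
  then show ?thesis
    using refl_rtrancl sym_rtrancl[OF assms(1)] trans_rtrancl
    unfolding bisimulation_def equiv_def by fast
qed

lemma rtrancl_subset_if_refl_trans:
  assumes "refl X" and "trans X" and "E \<subseteq> X"
  shows "E\<^sup>* \<subseteq> X"
proof (intro subrelI)
  fix a b assume "(a, b) \<in> E\<^sup>*"
  then show "(a, b) \<in> X"
    by (induction rule: rtrancl_induct) (use assms in \<open>auto intro: refl_onD elim: transE\<close>)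
qed

lemma bisimulation_Bisim:
  assumes "refl X" and "trans X"
  shows "bisimulation \<tau> lab (Bisim \<tau> lab X)"
proof -
  let ?U = "Bisim \<tau> lab X"
  have "sym ?U"
    unfolding Bisim_def bisimulation_def equiv_def sym_def by blast
  moreover have "lab s = lab t \<and> (\<exists>\<omega>\<in>couplings (\<tau> s) (\<tau> t). set_pmf \<omega> \<subseteq> ?U)"
    if "(s, t) \<in> ?U" for s t
    using that unfolding Bisim_def bisimulation_def by blast
  ultimately have bis: "bisimulation \<tau> lab (?U\<^sup>*)"
    by (intro bisimulation_rtrancl) blast+
  moreover have "?U\<^sup>* \<subseteq> X"
    by (rule rtrancl_subset_if_refl_trans[OF assms]) (auto simp: Bisim_def)
  ultimately have "?U\<^sup>* \<subseteq> ?U"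
    unfolding Bisim_def[of \<tau> lab X] by blast
  then have "?U\<^sup>* = ?U" by auto
  with bis show ?thesis by simp
qed

lemma trans_Prune: "trans (Prune Q)"
  unfolding Prune_def trans_def by blast

lemma refl_Prune: "refl Q \<Longrightarrow> refl (Prune Q)"
  unfolding Prune_def refl_on_def by blast

lemma policies_coupling:
  "P \<in> policies \<tau> lab \<Longrightarrow> u \<notin> diff_label_pairs lab \<Longrightarrow> P u \<in> couplings (\<tau> (fst u)) (\<tau> (snd u))"
  unfolding policies_def by blast

lemma policies_diff_label:
  "P \<in> policies \<tau> lab \<Longrightarrow> u \<in> diff_label_pairs lab \<Longrightarrow> P u = return_pmf u"
  unfolding policies_def by blast

lemma supports_path_to_diag_iff:
  "supports_path_to_diag R P u \<longleftrightarrow> (\<exists>xs. xs \<noteq> [] \<and> hd xs = u \<and> last xs \<in> diag_pairs \<and>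
     successively (\<lambda>x y. y \<in> set_pmf (P x)) xs \<and> (\<forall>x\<in>set xs. x \<in> R \<and> set_pmf (P x) \<subseteq> R))"
  by (simp add: supports_path_to_diag_def successively_conv_nth)

lemma supports_path_to_diag_base:
  "u \<in> diag_pairs \<Longrightarrow> u \<in> R \<Longrightarrow> set_pmf (P u) \<subseteq> R \<Longrightarrow> supports_path_to_diag R P u"
  unfolding supports_path_to_diag_iff by (intro exI[of _ "[u]"]) auto

lemma supports_path_to_diag_step:
  assumes "u \<in> R" and "set_pmf (P u) \<subseteq> R" and "y \<in> set_pmf (P u)"
    and "supports_path_to_diag R P y"
  shows "supports_path_to_diag R P u"
proof -
  obtain xs where "xs \<noteq> []" "hd xs = y" "last xs \<in> diag_pairs"
    "successively (\<lambda>x y. y \<in> set_pmf (P x)) xs" "\<forall>x\<in>set xs. x \<in> R \<and> set_pmf (P x) \<subseteq> R"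
    using assms(4) unfolding supports_path_to_diag_iff by blast
  with assms(1-3) show ?thesis
    unfolding supports_path_to_diag_iff by (intro exI[of _ "u # xs"]) (auto simp: successively_Cons)
qed

lemma supports_path_to_diag_induct [consumes 1, case_names base step]:
  assumes "supports_path_to_diag R P u"
    and base: "\<And>u. u \<in> diag_pairs \<Longrightarrow> u \<in> R \<Longrightarrow> set_pmf (P u) \<subseteq> R \<Longrightarrow> Q u"
    and step: "\<And>u y. u \<in> R \<Longrightarrow> set_pmf (P u) \<subseteq> R \<Longrightarrow> y \<in> set_pmf (P u) \<Longrightarrow> Q y \<Longrightarrow> Q u"
  shows "Q u"
proof -
  obtain xs where "xs \<noteq> []" "hd xs = u" "last xs \<in> diag_pairs"
    "successively (\<lambda>x y. y \<in> set_pmf (P x)) xs" "\<forall>x\<in>set xs. x \<in> R \<and> set_pmf (P x) \<subseteq> R"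
    using assms(1) unfolding supports_path_to_diag_iff by blast
  then show ?thesis
  proof (induction xs arbitrary: u)
    case Nil
    then show ?case by simp
  next
    case (Cons x ys)
    show ?case
    proof (cases "ys = []")
      case True
      with Cons.prems show ?thesis by (auto intro: base)
    next
      case False
      with Cons.prems have "Q (hd ys)"
        by (intro Cons.IH) (auto simp: successively_Cons)
      with Cons.prems False show ?thesis
        by (auto simp: successively_Cons intro: step)
    qed
  qed
qed

text \<open>Reaching the diagonal within \<open>n\<close> steps along couplings supported in \<open>R\<close>; unlike in
  \<^const>\<open>supports_path_to_diag\<close>, the coupling used at a pair may differ from visit to visit.\<close>
inductive reaches_diag :: "('s \<Rightarrow> 's pmf) \<Rightarrow> ('s \<times> 's) set \<Rightarrow> nat \<Rightarrow> 's \<times> 's \<Rightarrow> bool"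
  for \<tau> R where
  on_diag: "x \<in> diag_pairs \<Longrightarrow> reaches_diag \<tau> R n x"
| step: "x \<in> R \<Longrightarrow> \<omega> \<in> couplings (\<tau> (fst x)) (\<tau> (snd x)) \<Longrightarrow> set_pmf \<omega> \<subseteq> R \<Longrightarrow>
    y \<in> set_pmf \<omega> \<Longrightarrow> reaches_diag \<tau> R n y \<Longrightarrow> reaches_diag \<tau> R (Suc n) x"

lemma reaches_diag_in: "diag_pairs \<subseteq> R \<Longrightarrow> reaches_diag \<tau> R n x \<Longrightarrow> x \<in> R"
  by (auto elim: reaches_diag.cases)

lemma reaches_diag_swap:
  assumes "sym R"
  shows "reaches_diag \<tau> R n x \<Longrightarrow> reaches_diag \<tau> R n (prod.swap x)"
proof (induction rule: reaches_diag.induct)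
  case (on_diag x n)
  then show ?case by (auto simp: diag_pairs_def intro: reaches_diag.on_diag)
next
  case (step x \<omega> y n)
  have "prod.swap x \<in> R"
    using step.hyps(1) assms by (cases x) (auto dest: symD)
  moreover have "map_pmf prod.swap \<omega> \<in> couplings (\<tau> (fst (prod.swap x))) (\<tau> (snd (prod.swap x)))"
    using couplings_swap[OF step.hyps(2)] by simp
  moreover have "set_pmf (map_pmf prod.swap \<omega>) \<subseteq> R"
    using step.hyps(3) assms by (auto dest: symD)
  moreover have "prod.swap y \<in> set_pmf (map_pmf prod.swap \<omega>)"
    using step.hyps(4) by simp
  ultimately show ?case
    using step.IH by (rule reaches_diag.step)
qed

text \<open>Only meaningful for pairs that reach the diagonal (\<^const>\<open>Least\<close> of an empty set).\<close>
definition reach_rank :: "('s \<Rightarrow> 's pmf) \<Rightarrow> ('s \<times> 's) set \<Rightarrow> 's \<times> 's \<Rightarrow> nat" where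
  "reach_rank \<tau> R x = (LEAST n. reaches_diag \<tau> R n x)"

lemma reaches_diag_descent:
  assumes "reaches_diag \<tau> R n x" and "x \<notin> diag_pairs"
  obtains \<omega> y k where "x \<in> R" "\<omega> \<in> couplings (\<tau> (fst x)) (\<tau> (snd x))" "set_pmf \<omega> \<subseteq> R"
    "y \<in> set_pmf \<omega>" "reaches_diag \<tau> R k y" "reach_rank \<tau> R y < reach_rank \<tau> R x"
proof -
  have "reaches_diag \<tau> R (reach_rank \<tau> R x) x"
    unfolding reach_rank_def using assms(1) by (rule LeastI)
  then obtain k \<omega> y where "reach_rank \<tau> R x = Suc k" "x \<in> R"
    "\<omega> \<in> couplings (\<tau> (fst x)) (\<tau> (snd x))" "set_pmf \<omega> \<subseteq> R" "y \<in> set_pmf \<omega>"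
    "reaches_diag \<tau> R k y"
    using assms(2) by (cases rule: reaches_diag.cases) auto
  moreover have "reach_rank \<tau> R y \<le> k"
    unfolding reach_rank_def using \<open>reaches_diag \<tau> R k y\<close> by (rule Least_le)
  ultimately show ?thesis
    using that by auto
qed

definition descending_coupling ::
    "('s \<Rightarrow> 's pmf) \<Rightarrow> ('s \<times> 's) set \<Rightarrow> 's \<times> 's \<Rightarrow> ('s \<times> 's) pmf \<Rightarrow> bool" where
  "descending_coupling \<tau> R u \<omega> \<longleftrightarrow>
     \<omega> \<in> couplings (\<tau> (fst u)) (\<tau> (snd u)) \<and> (u \<in> R \<longrightarrow> set_pmf \<omega> \<subseteq> R) \<and>
     (\<forall>n. reaches_diag \<tau> R n u \<longrightarrow> u \<notin> diag_pairs \<longrightarrow>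
        (\<exists>y\<in>set_pmf \<omega>. \<exists>k. reaches_diag \<tau> R k y \<and> reach_rank \<tau> R y < reach_rank \<tau> R u))"

definition descent_policy :: "('s \<Rightarrow> 's pmf) \<Rightarrow> ('s \<Rightarrow> 'l) \<Rightarrow> ('s \<times> 's) set \<Rightarrow>
    's \<times> 's \<Rightarrow> ('s \<times> 's) pmf" where
  "descent_policy \<tau> lab R u =
     (if u \<in> diff_label_pairs lab then return_pmf u else SOME \<omega>. descending_coupling \<tau> R u \<omega>)"

lemma descending_coupling_exists:
  assumes "bisimulation \<tau> lab R"
  shows "\<exists>\<omega>. descending_coupling \<tau> R u \<omega>"
proof (cases "u \<in> R")
  case False
  then have "\<not> reaches_diag \<tau> R n u" if "u \<notin> diag_pairs" for n
    using that by (auto elim: reaches_diag.cases)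
  moreover have "pair_pmf (\<tau> (fst u)) (\<tau> (snd u)) \<in> couplings (\<tau> (fst u)) (\<tau> (snd u))"
    by (simp add: couplings_def map_fst_pair_pmf map_snd_pair_pmf)
  ultimately show ?thesis
    using False unfolding descending_coupling_def by blast
next
  case True
  show ?thesis
  proof (cases "\<exists>n. reaches_diag \<tau> R n u \<and> u \<notin> diag_pairs")
    case True
    then obtain n where "reaches_diag \<tau> R n u" "u \<notin> diag_pairs" by blast
    then obtain \<omega> y k where "\<omega> \<in> couplings (\<tau> (fst u)) (\<tau> (snd u))" "set_pmf \<omega> \<subseteq> R"
      "y \<in> set_pmf \<omega>" "reaches_diag \<tau> R k y" "reach_rank \<tau> R y < reach_rank \<tau> R u"
      by (rule reaches_diag_descent)
    then show ?thesis
      unfolding descending_coupling_def by blast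
  next
    case False
    obtain \<omega> where "\<omega> \<in> couplings (\<tau> (fst u)) (\<tau> (snd u))" "set_pmf \<omega> \<subseteq> R"
      using assms \<open>u \<in> R\<close> unfolding bisimulation_def by (cases u) fastforce
    with False show ?thesis
      unfolding descending_coupling_def by blast
  qed
qed

lemma descending_coupling_descent_policy:
  assumes "bisimulation \<tau> lab R" and "u \<notin> diff_label_pairs lab"
  shows "descending_coupling \<tau> R u (descent_policy \<tau> lab R u)"
  unfolding descent_policy_def using assms(2) someI_ex[OF descending_coupling_exists[OF assms(1)]]
  by simp

lemma descent_policy_in_policies:
  assumes "bisimulation \<tau> lab R"
  shows "descent_policy \<tau> lab R \<in> policies \<tau> lab"
  unfolding policies_def using descending_coupling_descent_policy[OF assms]
  by (auto simp: descending_coupling_def descent_policy_def)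

lemma supports_path_descent_policy:
  assumes bis: "bisimulation \<tau> lab R"
  shows "reaches_diag \<tau> R n u \<Longrightarrow> supports_path_to_diag R (descent_policy \<tau> lab R) u"
proof (induction u arbitrary: n rule: measure_induct_rule[of "reach_rank \<tau> R"])
  case (less u)
  have "u \<in> R"
    using reaches_diag_in[OF bisimulation_diag_pairs_subset[OF bis] less.prems] .
  then have u: "descending_coupling \<tau> R u (descent_policy \<tau> lab R u)"
    by (intro descending_coupling_descent_policy[OF bis] bisimulation_same_label[OF bis])
  show ?case
  proof (cases "u \<in> diag_pairs")
    case True
    with u \<open>u \<in> R\<close> show ?thesis
      unfolding descending_coupling_def by (blast intro: supports_path_to_diag_base)
  next
    case False
    with u less.prems obtain y k where "y \<in> set_pmf (descent_policy \<tau> lab R u)"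
      "reaches_diag \<tau> R k y" "reach_rank \<tau> R y < reach_rank \<tau> R u"
      unfolding descending_coupling_def by blast
    with u \<open>u \<in> R\<close> less.IH show ?thesis
      unfolding descending_coupling_def by (blast intro: supports_path_to_diag_step)
  qed
qed

lemma Filter_eq_reaches_diag:
  assumes bis: "bisimulation \<tau> lab R"
  shows "Filter \<tau> lab R = {u. \<exists>n. reaches_diag \<tau> R n u}"
proof (intro equalityI subsetI)
  fix u assume "u \<in> Filter \<tau> lab R"
  then obtain P where P: "P \<in> policies \<tau> lab" and "supports_path_to_diag R P u"
    unfolding Filter_def by blast
  from this(2) show "u \<in> {u. \<exists>n. reaches_diag \<tau> R n u}"
  proof (induction rule: supports_path_to_diag_induct)
    case (base u)
    then show ?case by (blast intro: reaches_diag.on_diag)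
  next
    case (step u y)
    then obtain n where "reaches_diag \<tau> R n y" by blast
    moreover have "P u \<in> couplings (\<tau> (fst u)) (\<tau> (snd u))"
      using policies_coupling[OF P bisimulation_same_label[OF bis step.hyps(1)]] .
    ultimately show ?case
      using step.hyps by (blast intro: reaches_diag.step)
  qed
next
  fix u assume "u \<in> {u. \<exists>n. reaches_diag \<tau> R n u}"
  then obtain n where n: "reaches_diag \<tau> R n u" by blast
  then have "u \<in> R"
    by (rule reaches_diag_in[OF bisimulation_diag_pairs_subset[OF bis]])
  with n show "u \<in> Filter \<tau> lab R"
    using descent_policy_in_policies[OF bis] supports_path_descent_policy[OF bis]
    unfolding Filter_def by (cases u) blast
qed

lemma sym_Filter:
  assumes "bisimulation \<tau> lab R"
  shows "sym (Filter \<tau> lab R)"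
proof -
  have "sym R"
    using assms by (simp add: bisimulation_def equiv_def)
  then have "reaches_diag \<tau> R n (t, s)" if "reaches_diag \<tau> R n (s, t)" for n s t
    using reaches_diag_swap[OF \<open>sym R\<close> that] by simp
  then show ?thesis
    unfolding Filter_eq_reaches_diag[OF assms] sym_def by blast
qed

lemma refl_Filter: "bisimulation \<tau> lab R \<Longrightarrow> refl (Filter \<tau> lab R)"
  by (auto simp: Filter_eq_reaches_diag diag_pairs_def intro!: reflI reaches_diag.on_diag)

lemma pmf_expectation_posE:
  fixes f :: "'a \<Rightarrow> real"
  assumes "0 < measure_pmf.expectation p f"
  obtains y where "y \<in> set_pmf p" and "0 < f y"
proof (rule ccontr)
  assume "\<not> thesis"
  with that have "\<forall>y\<in>set_pmf p. f y \<le> 0" by force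
  then have "0 \<le> measure_pmf.expectation p (\<lambda>y. - f y)"
    by (intro integral_nonneg_AE) (simp add: AE_measure_pmf_iff)
  with assms show False by simp
qed

lemma pmf_expectation_attains_upper_bound:
  fixes f :: "'a \<Rightarrow> real"
  assumes "finite (set_pmf p)" and le: "\<forall>y\<in>set_pmf p. f y \<le> c"
    and "c \<le> measure_pmf.expectation p f" and "y \<in> set_pmf p"
  shows "f y = c"
proof -
  have int: "integrable p g" for g :: "'a \<Rightarrow> real"
    using assms(1) by (rule integrable_measure_pmf_finite)
  have "measure_pmf.expectation p (\<lambda>z. c - f z) = c - measure_pmf.expectation p f"
    using int by (simp add: measure_pmf.prob_space)
  moreover have "0 \<le> measure_pmf.expectation p (\<lambda>z. c - f z)"
    using le by (intro integral_nonneg_AE) (simp add: AE_measure_pmf_iff)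
  ultimately have "measure_pmf.expectation p (\<lambda>z. c - f z) = 0"
    using assms(3) by linarith
  then have "AE z in p. c - f z = 0"
    using le by (subst (asm) integral_nonneg_eq_0_iff_AE) (auto simp: int AE_measure_pmf_iff)
  with assms(4) show ?thesis
    by (simp add: AE_measure_pmf_iff)
qed

context
  fixes P :: "'s::finite \<times> 's \<Rightarrow> ('s \<times> 's) pmf"
begin

lemma reach_within_nonneg: "0 \<le> reach_within P n x"
  by (induction n arbitrary: x) auto

lemma reach_within_le_1: "reach_within P n x \<le> 1"
  by (induction n arbitrary: x)
    (auto intro!: measure_pmf.integral_le_const simp: integrable_measure_pmf_finite)

lemma reach_within_le_reach_prob: "reach_within P n x \<le> reach_prob P x"
  unfolding reach_prob_def
  by (rule cSUP_upper) (auto intro: bdd_aboveI2 reach_within_le_1)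

lemma reach_prob_le_1: "reach_prob P x \<le> 1"
  unfolding reach_prob_def by (rule cSUP_least) (auto simp: reach_within_le_1)

lemma reach_prob_le_expectation:
  assumes "x \<notin> diag_pairs"
  shows "reach_prob P x \<le> measure_pmf.expectation (P x) (reach_prob P)"
  unfolding reach_prob_def[of P x]
proof (rule cSUP_least)
  fix n
  have "0 \<le> reach_prob P y" for y
    using reach_within_nonneg reach_within_le_reach_prob by (rule order_trans)
  then show "reach_within P n x \<le> measure_pmf.expectation (P x) (reach_prob P)"
    using assms by (cases n)
      (auto intro!: integral_mono reach_within_le_reach_prob simp: integrable_measure_pmf_finite)
qed simp

lemma reach_prob_one_successor:
  assumes "reach_prob P x = 1" and "x \<notin> diag_pairs" and "y \<in> set_pmf (P x)"
  shows "reach_prob P y = 1"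
  using reach_prob_le_expectation[OF assms(2)] assms(1,3) reach_prob_le_1
  by (intro pmf_expectation_attains_upper_bound[where p = "P x"]) auto

lemma reach_prob_one_same_label:
  assumes "P \<in> policies \<tau> lab" and "reach_prob P x = 1"
  shows "x \<notin> diff_label_pairs lab"
proof
  assume x: "x \<in> diff_label_pairs lab"
  then have "x \<notin> diag_pairs"
    by (auto simp: diff_label_pairs_def diag_pairs_def)
  with policies_diff_label[OF assms(1) x] have "reach_within P n x = 0" for n
    by (induction n) auto
  then have "reach_prob P x = 0"
    by (simp add: reach_prob_def)
  with assms(2) show False by simp
qed

lemma reach_prob_swap_policy:
  "reach_prob (\<lambda>x. map_pmf prod.swap (P (prod.swap x))) x = reach_prob P (prod.swap x)"
proof -
  have "reach_within (\<lambda>x. map_pmf prod.swap (P (prod.swap x))) n x = reach_within P n (prod.swap x)"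
    for n x
  proof (induction n arbitrary: x)
    case 0
    then show ?case by (cases x) (auto simp: diag_pairs_def)
  next
    case (Suc n)
    have "prod.swap x \<in> diag_pairs \<longleftrightarrow> x \<in> diag_pairs"
      by (cases x) (auto simp: diag_pairs_def)
    with Suc.IH show ?case by (simp add: o_def)
  qed
  then show ?thesis by (simp add: reach_prob_def)
qed

end

lemma robust_bisimI: "P \<in> policies \<tau> lab \<Longrightarrow> reach_prob P x = 1 \<Longrightarrow> x \<in> robust_bisim \<tau> lab"
  by (cases x) (auto simp: robust_bisim_def)

lemma robust_bisimE:
  assumes "x \<in> robust_bisim \<tau> lab"
  obtains P where "P \<in> policies \<tau> lab" and "reach_prob P x = 1"
  using assms by (cases x) (auto simp: robust_bisim_def)

lemma robust_bisim_step:
  fixes P :: "'s::finite \<times> 's \<Rightarrow> ('s \<times> 's) pmf"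
  assumes "P \<in> policies \<tau> lab" and "reach_prob P x = 1" and "x \<notin> diag_pairs"
  shows "P x \<in> couplings (\<tau> (fst x)) (\<tau> (snd x))" and "set_pmf (P x) \<subseteq> robust_bisim \<tau> lab"
  using policies_coupling[OF assms(1) reach_prob_one_same_label[OF assms(1,2)]]
    reach_prob_one_successor[OF assms(2,3)] robust_bisimI[OF assms(1)]
  by blast+

lemma sym_robust_bisim: "sym (robust_bisim (\<tau> :: 's::finite \<Rightarrow> 's pmf) lab)"
proof (rule symI)
  fix s t :: 's
  assume "(s, t) \<in> robust_bisim \<tau> lab"
  then obtain P where P: "P \<in> policies \<tau> lab" "reach_prob P (s, t) = 1"
    by (rule robust_bisimE)
  let ?Q = "\<lambda>x. map_pmf prod.swap (P (prod.swap x))"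
  have "?Q \<in> policies \<tau> lab"
  proof -
    have "prod.swap u \<in> diff_label_pairs lab \<longleftrightarrow> u \<in> diff_label_pairs lab" for u
      by (cases u) (auto simp: diff_label_pairs_def)
    then show ?thesis
      using P(1) couplings_swap unfolding policies_def by fastforce
  qed
  moreover have "reach_prob ?Q (t, s) = 1"
    using P(2) by (simp add: reach_prob_swap_policy)
  ultimately show "(t, s) \<in> robust_bisim \<tau> lab"
    by (rule robust_bisimI)
qed

lemma bisimulation_rtrancl_robust_bisim:
  "bisimulation \<tau> lab ((robust_bisim (\<tau> :: 's::finite \<Rightarrow> 's pmf) lab)\<^sup>*)"
proof (rule bisimulation_rtrancl[OF sym_robust_bisim])
  fix s t
  assume "(s, t) \<in> robust_bisim \<tau> lab" and "s \<noteq> t"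
  then obtain P where P: "P \<in> policies \<tau> lab" "reach_prob P (s, t) = 1"
    and "(s, t) \<notin> diag_pairs"
    by (auto simp: diag_pairs_def elim: robust_bisimE)
  then have "P (s, t) \<in> couplings (\<tau> s) (\<tau> t)" "set_pmf (P (s, t)) \<subseteq> (robust_bisim \<tau> lab)\<^sup>*"
    using robust_bisim_step[of P] by force+
  moreover have "lab s = lab t"
    using reach_prob_one_same_label[OF P] by (simp add: diff_label_pairs_def)
  ultimately show
    "lab s = lab t \<and> (\<exists>\<omega>\<in>couplings (\<tau> s) (\<tau> t). set_pmf \<omega> \<subseteq> (robust_bisim \<tau> lab)\<^sup>*)"
    by blast
qed

lemma reaches_diag_if_reach_prob_one:
  fixes P :: "'s::finite \<times> 's \<Rightarrow> ('s \<times> 's) pmf"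
  assumes R: "robust_bisim \<tau> lab \<subseteq> R" and P: "P \<in> policies \<tau> lab"
    and "reach_prob P x = 1"
  shows "\<exists>n. reaches_diag \<tau> R n x"
proof -
  have "\<exists>n. 0 < reach_within P n x"
  proof (rule ccontr)
    assume "\<nexists>n. 0 < reach_within P n x"
    then have "reach_prob P x \<le> 0"
      unfolding reach_prob_def by (intro cSUP_least) (auto simp: not_less)
    with assms(3) show False by simp
  qed
  then obtain n where "0 < reach_within P n x" ..
  then have "reaches_diag \<tau> R n x"
    using assms(3)
  proof (induction n arbitrary: x)
    case 0
    then show ?case by (auto intro: reaches_diag.on_diag split: if_splits)
  next
    case (Suc n)
    show ?case
    proof (cases "x \<in> diag_pairs")
      case True
      then show ?thesis by (rule reaches_diag.on_diag)
    next
      case False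
      with Suc.prems(1) obtain y where y: "y \<in> set_pmf (P x)" "0 < reach_within P n y"
        by (auto elim: pmf_expectation_posE)
      note x = robust_bisim_step[OF P Suc.prems(2) False]
      have "x \<in> R"
        using robust_bisimI[OF P Suc.prems(2)] R by blast
      moreover have "set_pmf (P x) \<subseteq> R"
        using x(2) R by (rule order_trans)
      moreover have "reaches_diag \<tau> R n y"
        using Suc.IH[OF y(2) reach_prob_one_successor[OF Suc.prems(2) False y(1)]] .
      ultimately show ?thesis
        using x(1) y(1) by (intro reaches_diag.step)
    qed
  qed
  then show ?thesis ..
qed

lemma reaches_diag_robust_bisim_trans:
  fixes P :: "'s::finite \<times> 's \<Rightarrow> ('s \<times> 's) pmf"
  assumes "trans R" and R: "robust_bisim \<tau> lab \<subseteq> R" and P: "P \<in> policies \<tau> lab"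
  shows "reaches_diag \<tau> R n x \<Longrightarrow> reach_prob P (s, fst x) = 1 \<Longrightarrow>
    \<exists>m. reaches_diag \<tau> R m (s, snd x)"
proof (induction arbitrary: s rule: reaches_diag.induct)
  case (on_diag x n)
  then have "(s, snd x) = (s, fst x)"
    by (auto simp: diag_pairs_def)
  with reaches_diag_if_reach_prob_one[OF R P on_diag.prems] show ?case
    by simp
next
  case (step x \<omega>2 y n)
  obtain t u where x: "x = (t, u)" by (cases x)
  obtain t' u' where y: "y = (t', u')" by (cases y)
  show ?case
  proof (cases "s = t")
    case True
    with reaches_diag.step[OF step.hyps] x show ?thesis by auto
  next
    case False
    let ?\<omega>1 = "P (s, t)"
    have st: "reach_prob P (s, t) = 1" "(s, t) \<notin> diag_pairs"
      using step.prems x False by (auto simp: diag_pairs_def)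
    note \<omega>1 = robust_bisim_step[OF P st]
    have "t' \<in> set_pmf (\<tau> t)"
      using set_pmf_couplings(1)[OF step.hyps(2)] step.hyps(4) x y by force
    then obtain s' where s': "(s', t') \<in> set_pmf ?\<omega>1"
      using set_pmf_couplings(2)[OF \<omega>1(1)] by force
    then have "reach_prob P (s', t') = 1"
      by (rule reach_prob_one_successor[OF st])
    then obtain m where m: "reaches_diag \<tau> R m (s', u')"
      using step.IH y by auto
    obtain \<theta> where \<theta>: "\<theta> \<in> couplings (\<tau> s) (\<tau> u)" "set_pmf \<theta> = set_pmf ?\<omega>1 O set_pmf \<omega>2"
      using couplings_compose[OF \<omega>1(1)] step.hyps(2) x by auto
    have "(s, t) \<in> R"
      using robust_bisimI[OF P st(1)] R by blast
    then have "(s, u) \<in> R"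
      using transD[OF assms(1)] step.hyps(1) x by blast
    moreover have "set_pmf \<theta> \<subseteq> R O R"
      unfolding \<theta>(2) using \<omega>1(2) R step.hyps(3) by (intro relcomp_mono) auto
    then have "set_pmf \<theta> \<subseteq> R"
      using trans_O_subset[OF assms(1)] by (rule order_trans)
    moreover have "(s', u') \<in> set_pmf \<theta>"
      using \<theta>(2) s' step.hyps(4) y by auto
    ultimately have "reaches_diag \<tau> R (Suc m) (s, u)"
      using \<theta>(1) m by (intro reaches_diag.step) auto
    with x show ?thesis by auto
  qed
qed

lemma robust_bisim_subset_Filter:
  fixes \<tau> :: "'s::finite \<Rightarrow> 's pmf"
  assumes "bisimulation \<tau> lab R" and "robust_bisim \<tau> lab \<subseteq> R"
  shows "robust_bisim \<tau> lab \<subseteq> Filter \<tau> lab R"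
  using reaches_diag_if_reach_prob_one[OF assms(2)]
  by (auto simp: Filter_eq_reaches_diag[OF assms(1)] elim: robust_bisimE)

lemma Filter_robust_bisim_trans:
  fixes \<tau> :: "'s::finite \<Rightarrow> 's pmf"
  assumes bis: "bisimulation \<tau> lab R" and R: "robust_bisim \<tau> lab \<subseteq> R"
    and "(s, t) \<in> robust_bisim \<tau> lab" and "(t, u) \<in> Filter \<tau> lab R"
  shows "(s, u) \<in> Filter \<tau> lab R"
proof -
  obtain P where "P \<in> policies \<tau> lab" "reach_prob P (s, t) = 1"
    using assms(3) by (rule robust_bisimE)
  moreover have "trans R"
    using bis by (simp add: bisimulation_def equiv_def)
  moreover obtain n where "reaches_diag \<tau> R n (t, u)"
    using assms(4) by (auto simp: Filter_eq_reaches_diag[OF bis])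
  ultimately show ?thesis
    using reaches_diag_robust_bisim_trans[OF _ R, of P n "(t, u)" s]
    by (auto simp: Filter_eq_reaches_diag[OF bis])
qed

lemma robust_bisim_subset_Prune_Filter:
  fixes \<tau> :: "'s::finite \<Rightarrow> 's pmf"
  assumes "bisimulation \<tau> lab R" and "robust_bisim \<tau> lab \<subseteq> R"
  shows "robust_bisim \<tau> lab \<subseteq> Prune (Filter \<tau> lab R)"
proof (intro subrelI)
  fix s t
  assume st: "(s, t) \<in> robust_bisim \<tau> lab"
  then have ts: "(t, s) \<in> robust_bisim \<tau> lab"
    using sym_robust_bisim by (blast dest: symD)
  note Filter_trans = Filter_robust_bisim_trans[OF assms]
  note Filter_swap = symD[OF sym_Filter[OF assms(1)]]
  have "(s, u) \<in> Filter \<tau> lab R" if "(t, u) \<in> Filter \<tau> lab R" for u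
    using Filter_trans[OF st that] .
  moreover have "(u, t) \<in> Filter \<tau> lab R" if "(u, s) \<in> Filter \<tau> lab R" for u
    using Filter_swap[OF Filter_trans[OF ts Filter_swap[OF that]]] .
  ultimately show "(s, t) \<in> Prune (Filter \<tau> lab R)"
    using robust_bisim_subset_Filter[OF assms] st unfolding Prune_def by blast
qed

theorem proposition8:
  fixes \<tau> :: "'s::finite \<Rightarrow> 's pmf" and lab :: "'s \<Rightarrow> 'l::finite"
    and R :: "('s \<times> 's) set"
  assumes "card (range lab) \<ge> 2"
    and "bisimulation \<tau> lab R"
    and "robust_bisim \<tau> lab \<subseteq> R"
    and "R \<subseteq> bisimilarity \<tau> lab"
  shows "bisimulation \<tau> lab (Refine \<tau> lab R) \<and>
         robust_bisim \<tau> lab \<subseteq> Refine \<tau> lab R \<and> Refine \<tau> lab R \<subseteq> bisimilarity \<tau> lab"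
proof -
  let ?X = "Prune (Filter \<tau> lab R)"
  have X: "refl ?X" "trans ?X"
    using refl_Prune[OF refl_Filter[OF assms(2)]] trans_Prune by blast+
  have "(robust_bisim \<tau> lab)\<^sup>* \<subseteq> ?X"
    using rtrancl_subset_if_refl_trans[OF X robust_bisim_subset_Prune_Filter[OF assms(2,3)]] .
  then have "robust_bisim \<tau> lab \<subseteq> Refine \<tau> lab R"
    using bisimulation_rtrancl_robust_bisim unfolding Refine_def Bisim_def by blast
  moreover have "bisimulation \<tau> lab (Refine \<tau> lab R)"
    unfolding Refine_def by (rule bisimulation_Bisim[OF X])
  moreover have "Refine \<tau> lab R \<subseteq> bisimilarity \<tau> lab"
    unfolding Refine_def Bisim_def bisimilarity_def by blast
  ultimately show ?thesis by blast
qed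

end
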